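(* Let $\varepsilon\in(0,1]$ and $D>0$, and set $n_0:=4K(d+1)/\varepsilon$. Then the set $$\mathcal S=\bigcup_{n\ge n_0}\ \bigcup_{\theta\in\Theta}\ \bigcup_{(x,x^* )\in[K^\theta]\times[K^*]:\,|I_{n,D}(x,x^*,\theta)|\ge n\varepsilon}\{S^{\theta,n}_x-S^{*,n}_{x^*}\}$$ is relatively compact in $(C^0([0,1]),\|\cdot\|_\infty)$.
   Context: Fix integers $K\ge1$, $d\ge1$, $\sigma_-\in(0,1)$; $[K']=\{1,\dots,K'\}$; $\Delta_{K'}$ = probability vectors on $[K']$; $\Sigma^{\sigma_-}_{K'}$ = $K'\times K'$ stochastic matrices with all entries $\ge\sigma_-$; $\mathbb R_d[X]$ = real polynomials of degree $\le d$ on $\mathbb R_+$; $\Gamma$ a set of probability densities on $\mathbb R$. $\Theta=\bigcup_{K'=1}^K\{[K']\}\times\Delta_{K'}\times\Sigma^{\sigma_-}_{K'}\times\Gamma^{K'}\times(\mathbb R_d[X])^{K'}$, elements $\theta=(K^\theta,\pi^\theta,Q^\theta,\gamma^\theta,T^\theta)$ with trends $T^\theta_x\in\mathbb R_d[X]$; $\theta^*=(K^*,\pi^*,Q^*,\gamma^*,T^* )\in\Theta$ is a fixed (true) parameter. $I_{n,D}(x,x^*,\theta)=\{t\in\{1,\dots,n\}:|T^*_{x^*}(t)-T^\theta_x(t)|\le D\}$. Rescaled trends: $S^{\theta,n}_x(u)=T^\theta_x(nu)$ and $S^{*,n}_{x^*}(u)=T^*_{x^*}(nu)$ for $u\in[0,1]$.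 *)

theory Defs
  imports "HOL-Analysis.Analysis" "HOL-Computational_Algebra.Polynomial"
begin

text \<open>A parameter theta = (K', pi, Q, gamma, T). Hidden states are indexed by {1..K'};
  values of pi, Q, gamma, T outside {1..K'} are irrelevant.\<close>
type_synonym param =
  "nat \<times> (nat \<Rightarrow> real) \<times> (nat \<Rightarrow> nat \<Rightarrow> real) \<times> (nat \<Rightarrow> real \<Rightarrow> real) \<times> (nat \<Rightarrow> real poly)"

definition prob_vec :: "nat \<Rightarrow> (nat \<Rightarrow> real) \<Rightarrow> bool" where
  "prob_vec K' p \<longleftrightarrow> (\<forall>i\<in>{1..K'}. 0 \<le> p i) \<and> (\<Sum>i=1..K'. p i) = 1"

definition stoch_mat_lb :: "real \<Rightarrow> nat \<Rightarrow> (nat \<Rightarrow> nat \<Rightarrow> real) \<Rightarrow> bool" where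
  "stoch_mat_lb \<sigma> K' Q \<longleftrightarrow>
     (\<forall>i\<in>{1..K'}. \<forall>j\<in>{1..K'}. \<sigma> \<le> Q i j) \<and> (\<forall>i\<in>{1..K'}. (\<Sum>j=1..K'. Q i j) = 1)"

definition Theta :: "nat \<Rightarrow> nat \<Rightarrow> real \<Rightarrow> (real \<Rightarrow> real) set \<Rightarrow> param set" where
  "Theta K d \<sigma> \<Gamma> = {(K', p, Q, g, T). 1 \<le> K' \<and> K' \<le> K \<and> prob_vec K' p \<and> stoch_mat_lb \<sigma> K' Q
       \<and> (\<forall>x\<in>{1..K'}. g x \<in> \<Gamma>) \<and> (\<forall>x\<in>{1..K'}. degree (T x) \<le> d)}"

definition I_set :: "nat \<Rightarrow> real \<Rightarrow> (nat \<Rightarrow> real poly) \<Rightarrow> nat \<Rightarrow> (nat \<Rightarrow> real poly) \<Rightarrow> nat \<Rightarrow> nat set" where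
  "I_set n D Ts xs T x = {t\<in>{1..n}. \<bar>poly (Ts xs) (real t) - poly (T x) (real t)\<bar> \<le> D}"

definition rescaled :: "real poly \<Rightarrow> nat \<Rightarrow> real \<Rightarrow> real" where
  "rescaled P n u = poly P (real n * u)"

text \<open>The space (C^0([0,1]), sup norm), elements are functions extensional on [0,1].\<close>
definition C01 :: "(real \<Rightarrow> real) metric" where
  "C01 = cfunspace (top_of_set {0..1}) euclidean_metric"

definition relatively_compact_C01 :: "(real \<Rightarrow> real) set \<Rightarrow> bool" where
  "relatively_compact_C01 A \<longleftrightarrow> compactin (mtopology_of C01) (mtopology_of C01 closure_of A)"

end

theory Submission
  imports Defs
begin

text \<open>Each function in the set is the restriction to [0,1] of the polynomial
  P(u) = T_x(nu) - T*_x*(nu) of degree at most d, and |P| \<le> D at the at least n\<epsilon> points t/n,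
  t \<in> I_{n,D}. Among these points one can choose d+1 nodes pairwise at distance at least
  \<epsilon>/(2(d+1)), and Lagrange interpolation at them bounds P on [0,1] uniformly by
  (d+1) D (2(d+1)/\<epsilon>)^d. Bounded subsets of the (d+1)-dimensional space of polynomials of
  degree at most d are totally bounded in C^0([0,1]), which is complete.\<close>

subsection \<open>The space C^0([0,1])\<close>

lemma restrict_in_C01:
  assumes "continuous_on {0..1} f"
  shows "restrict f {0..1} \<in> mspace C01"
proof -
  have "compactin (top_of_set {0..1::real}) (topspace (top_of_set {0..1}))"
    by (simp add: compactin_subtopology compact_Icc)
  moreover have "continuous_on {0..1} (restrict f {0..1})"
    using assms by (rule continuous_on_cong[THEN iffD1, rotated -1]) auto
  ultimately show ?thesis
    unfolding C01_def
    using compact_continuous_image[OF assms compact_Icc] compact_imp_bounded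
    by (simp add: compactin_mspace_cfunspace)
qed

lemma mcomplete_C01: "Metric_space.mcomplete (mspace C01) (mdist C01)"
proof -
  have "(Met_TC.Self :: real metric) = euclidean_metric"
    by (simp add: Met_TC.Self_def euclidean_metric_def)
  moreover have "mcomplete_of (cfunspace (top_of_set {0..1::real}) (Met_TC.Self :: real metric))"
    using Met_TC.mcomplete_cfunspace complete_UNIV by simp
  ultimately show ?thesis
    unfolding C01_def mcomplete_of_def by simp
qed

lemma mdist_C01_le:
  assumes "f \<in> mspace C01" "g \<in> mspace C01" "0 \<le> B"
    and "\<And>u. u \<in> {0..1} \<Longrightarrow> \<bar>f u - g u\<bar> \<le> B"
  shows "mdist C01 f g \<le> B"
  unfolding C01_def using assms
  by (intro mdist_cfunspace_le) (auto simp: dist_real_def)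

lemma relatively_compact_C01I:
  assumes "Metric_space.mtotally_bounded (mspace C01) (mdist C01) A"
  shows "relatively_compact_C01 A"
  using Metric_space.mtotally_bounded_eq_compact_closure_of[OF Metric_space_mspace_mdist mcomplete_C01]
    assms
  unfolding relatively_compact_C01_def mtopology_of_def by blast

text \<open>The \<epsilon>-net is the image of a finite grid in the coefficient box.\<close>

lemma mtotally_bounded_C01_linear_image_box:
  fixes L :: "nat \<Rightarrow> real \<Rightarrow> real" and M \<Lambda> :: real and d :: nat
  assumes M: "0 \<le> M" and \<Lambda>: "0 < \<Lambda>"
    and cont: "\<And>i. i \<le> d \<Longrightarrow> continuous_on {0..1} (L i)"
    and bound: "\<And>i u. i \<le> d \<Longrightarrow> u \<in> {0..1} \<Longrightarrow> \<bar>L i u\<bar> \<le> \<Lambda>"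
  defines "F \<equiv> \<lambda>c. restrict (\<lambda>u. \<Sum>i\<le>d. c i * L i u) {0..1::real}"
  shows "Metric_space.mtotally_bounded (mspace C01) (mdist C01) (F ` {c. \<forall>i\<le>d. \<bar>c i\<bar> \<le> M})"
  unfolding Metric_space.mtotally_bounded_def[OF Metric_space_mspace_mdist]
proof (intro allI impI)
  fix e :: real assume e: "0 < e"
  define h where "h = e / (2 * (real d + 1) * \<Lambda>)"
  have h: "0 < h" using e \<Lambda> by (simp add: h_def)
  define N where "N = \<lceil>M / h\<rceil>"
  define clamp where "clamp = (\<lambda>y::real. max (-M) (min M y))"
  define grid where "grid = (\<lambda>k. clamp (real_of_int k * h)) ` {-N..N}"
  define box where "box = {c. \<forall>i\<le>d. \<bar>c i\<bar> \<le> M}"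
  have F_in: "F c \<in> mspace C01" for c
    unfolding F_def by (intro restrict_in_C01 continuous_intros cont) auto
  have clamp_closer: "\<bar>clamp y - c\<bar> \<le> \<bar>y - c\<bar>" if "\<bar>c\<bar> \<le> M" for y c
    using that unfolding clamp_def max_def min_def by (smt (verit))
  have grid_bound: "\<bar>y\<bar> \<le> M" if "y \<in> grid" for y
    using M that by (auto simp: grid_def clamp_def)
  have "finite (F ` ({..d} \<rightarrow>\<^sub>E grid))"
    unfolding grid_def by (intro finite_imageI finite_PiE) auto
  moreover have "F ` ({..d} \<rightarrow>\<^sub>E grid) \<subseteq> F ` box"
    using grid_bound by (intro image_mono) (auto simp: box_def PiE_iff)
  moreover have "F ` box \<subseteq> (\<Union>f\<in>F ` ({..d} \<rightarrow>\<^sub>E grid). Metric_space.mball (mspace C01) (mdist C01) f e)"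
  proof (rule image_subsetI)
    fix c assume c: "c \<in> box"
    define g where "g = restrict (\<lambda>i. clamp (real_of_int \<lfloor>c i / h\<rfloor> * h)) {..d}"
    have close: "\<bar>g i - c i\<bar> \<le> h" if "i \<le> d" for i
    proof -
      have "\<bar>g i - c i\<bar> \<le> \<bar>real_of_int \<lfloor>c i / h\<rfloor> * h - c i\<bar>"
        using that c clamp_closer unfolding g_def box_def by simp
      also have "\<dots> \<le> h"
        using h floor_divide_lower[OF h, of "c i"] floor_divide_upper[OF h, of "c i"] by (simp add: algebra_simps)
      finally show ?thesis .
    qed
    have "\<lfloor>c i / h\<rfloor> \<in> {-N..N}" if "i \<le> d" for i
    proof -
      have "\<bar>c i\<bar> \<le> M" using c that by (simp add: box_def)
      then have "-M / h \<le> c i / h" "c i / h \<le> M / h"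
        using h by (intro divide_right_mono; simp)+
      moreover have "M / h \<le> of_int N" unfolding N_def by (rule le_of_int_ceiling)
      ultimately have "- of_int N \<le> c i / h" "c i / h < of_int N + 1" by linarith+
      then show ?thesis by (simp add: le_floor_iff floor_le_iff)
    qed
    then have g: "g \<in> {..d} \<rightarrow>\<^sub>E grid" by (auto simp: g_def grid_def PiE_iff)
    have "mdist C01 (F g) (F c) \<le> e / 2"
    proof (rule mdist_C01_le[OF F_in F_in])
      fix u :: real assume u: "u \<in> {0..1}"
      have "\<bar>F g u - F c u\<bar> = \<bar>\<Sum>i\<le>d. (g i - c i) * L i u\<bar>"
        using u unfolding F_def by (simp add: sum_subtractf[symmetric] algebra_simps)
      also have "\<dots> \<le> (\<Sum>i\<le>d. \<bar>(g i - c i) * L i u\<bar>)" by (rule sum_abs)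
      also have "\<dots> \<le> (\<Sum>i\<le>d. h * \<Lambda>)"
        unfolding abs_mult using close bound u h by (intro sum_mono mult_mono) auto
      also have "\<dots> = e / 2"
        using \<Lambda> by (simp add: h_def) (simp add: field_simps)
      finally show "\<bar>F g u - F c u\<bar> \<le> e / 2" .
    qed (use e in simp)
    then have "F c \<in> Metric_space.mball (mspace C01) (mdist C01) (F g) e"
      using e F_in by (simp add: Metric_space.in_mball[OF Metric_space_mspace_mdist])
    with g show "F c \<in> (\<Union>f\<in>F ` ({..d} \<rightarrow>\<^sub>E grid). Metric_space.mball (mspace C01) (mdist C01) f e)"
      by blast
  qed
  ultimately show "\<exists>K. finite K \<and> K \<subseteq> F ` box \<and>
      F ` box \<subseteq> (\<Union>f\<in>K. Metric_space.mball (mspace C01) (mdist C01) f e)"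
    by blast
qed

subsection \<open>Lagrange interpolation\<close>

definition lagrange_basis :: "(nat \<Rightarrow> real) \<Rightarrow> nat \<Rightarrow> nat \<Rightarrow> real \<Rightarrow> real" where
  "lagrange_basis w d i u = (\<Prod>j\<in>{..d}-{i}. (u - w j) / (w i - w j))"

lemma continuous_on_lagrange_basis: "continuous_on S (lagrange_basis w d i)"
  unfolding lagrange_basis_def divide_inverse
  by (intro continuous_on_prod continuous_on_mult continuous_on_diff continuous_on_id continuous_on_const)

lemma poly_eq_lagrange_interpolation:
  fixes P :: "real poly" and w :: "nat \<Rightarrow> real"
  assumes deg: "degree P \<le> d"
    and distinct: "\<And>i j. i \<le> d \<Longrightarrow> j \<le> d \<Longrightarrow> i \<noteq> j \<Longrightarrow> w i \<noteq> w j"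
  shows "poly P u = (\<Sum>i\<le>d. poly P (w i) * lagrange_basis w d i u)"
proof -
  define B where "B i = smult (inverse (\<Prod>j\<in>{..d}-{i}. w i - w j)) (\<Prod>j\<in>{..d}-{i}. [:- w j, 1:])" for i
  have poly_B: "poly (B i) x = lagrange_basis w d i x" for i x
    unfolding lagrange_basis_def prod_dividef
    by (simp add: B_def poly_prod divide_inverse mult.commute)
  have deg_B: "degree (B i) \<le> d" if "i \<le> d" for i
  proof -
    have "degree (B i) \<le> degree (\<Prod>j\<in>{..d}-{i}. [:- w j, 1:])"
      unfolding B_def by (rule degree_smult_le)
    also have "\<dots> \<le> (\<Sum>j\<in>{..d}-{i}. degree [:- w j, 1:])"
      using degree_prod_sum_le[of "{..d}-{i}" "\<lambda>j. [:- w j, 1:]"] by (simp add: o_def)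
    also have "\<dots> = d" using that by simp
    finally show ?thesis .
  qed
  define Q where "Q = (\<Sum>i\<le>d. smult (poly P (w i)) (B i))"
  have "poly P x = poly Q x" if "x \<in> w ` {..d}" for x
  proof -
    from that obtain k where x: "x = w k" and k: "k \<le> d" by (auto elim!: imageE)
    have basis_at_node: "lagrange_basis w d i (w k) = (if i = k then 1 else 0)" if i: "i \<le> d" for i
    proof (cases "i = k")
      case True
      have "w k - w j \<noteq> 0" if "j \<in> {..d}-{k}" for j
        using distinct[of k j] k that by auto
      then show ?thesis
        using True unfolding lagrange_basis_def by (auto intro!: prod.neutral)
    next
      case False
      then show ?thesis
        using k i unfolding lagrange_basis_def by (auto intro!: prod_zero)
    qed
    have "poly Q x = (\<Sum>i\<le>d. poly P (w i) * lagrange_basis w d i (w k))"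
      by (simp add: Q_def x poly_sum poly_B)
    also have "\<dots> = (\<Sum>i\<le>d. if i = k then poly P (w k) else 0)"
      by (rule sum.cong) (simp_all add: basis_at_node)
    also have "\<dots> = poly P x"
      using k x by simp
    finally show ?thesis ..
  qed
  moreover have "card (w ` {..d}) = d + 1"
    using distinct by (subst card_image) (auto intro: inj_onI)
  moreover have "degree Q \<le> d"
    unfolding Q_def
    by (intro degree_sum_le) (auto intro: order.trans[OF degree_smult_le] deg_B)
  ultimately have "P = Q"
    using deg by (intro poly_eqI_degree[where A = "w ` {..d}"]) auto
  then have "poly P u = poly Q u" by simp
  then show ?thesis
    by (simp add: Q_def poly_sum poly_B)
qed

lemma abs_lagrange_basis_le:
  fixes w :: "nat \<Rightarrow> real"
  assumes "i \<le> d" "0 < \<delta>" "u \<in> {0..1}" "\<And>j. j \<le> d \<Longrightarrow> w j \<in> {0..1}"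
    and sep: "\<And>i j. i \<le> d \<Longrightarrow> j \<le> d \<Longrightarrow> i \<noteq> j \<Longrightarrow> \<delta> \<le> \<bar>w i - w j\<bar>"
  shows "\<bar>lagrange_basis w d i u\<bar> \<le> (1 / \<delta>) ^ d"
proof -
  have "\<bar>lagrange_basis w d i u\<bar> = (\<Prod>j\<in>{..d}-{i}. \<bar>u - w j\<bar> / \<bar>w i - w j\<bar>)"
    by (simp add: lagrange_basis_def abs_prod)
  also have "\<dots> \<le> (\<Prod>j\<in>{..d}-{i}. 1 / \<delta>)"
  proof (rule prod_mono)
    fix j assume j: "j \<in> {..d}-{i}"
    have "\<bar>u - w j\<bar> \<le> 1" using assms(3) assms(4)[of j] j by auto
    moreover have "\<delta> \<le> \<bar>w i - w j\<bar>" using sep assms(1) j by auto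
    ultimately show "0 \<le> \<bar>u - w j\<bar> / \<bar>w i - w j\<bar> \<and> \<bar>u - w j\<bar> / \<bar>w i - w j\<bar> \<le> 1 / \<delta>"
      using assms(2) by (auto intro: frac_le)
  qed
  also have "\<dots> = (1 / \<delta>) ^ d" using assms(1) by simp
  finally show ?thesis .
qed

lemma abs_poly_le_of_separated_nodes:
  fixes P :: "real poly" and w :: "nat \<Rightarrow> real"
  assumes deg: "degree P \<le> d" and \<delta>: "0 < \<delta>" and D: "0 \<le> D"
    and nodes: "\<And>j. j \<le> d \<Longrightarrow> w j \<in> {0..1}"
    and sep: "\<And>i j. i \<le> d \<Longrightarrow> j \<le> d \<Longrightarrow> i \<noteq> j \<Longrightarrow> \<delta> \<le> \<bar>w i - w j\<bar>"
    and small: "\<And>i. i \<le> d \<Longrightarrow> \<bar>poly P (w i)\<bar> \<le> D"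
    and u: "u \<in> {0..1}"
  shows "\<bar>poly P u\<bar> \<le> (real d + 1) * D * (1 / \<delta>) ^ d"
proof -
  have "w i \<noteq> w j" if "i \<le> d" "j \<le> d" "i \<noteq> j" for i j
    using sep[OF that] \<delta> by auto
  then have "poly P u = (\<Sum>i\<le>d. poly P (w i) * lagrange_basis w d i u)"
    by (rule poly_eq_lagrange_interpolation[OF deg])
  then have "\<bar>poly P u\<bar> = \<bar>\<Sum>i\<le>d. poly P (w i) * lagrange_basis w d i u\<bar>"
    by simp
  also have "\<dots> \<le> (\<Sum>i\<le>d. \<bar>poly P (w i) * lagrange_basis w d i u\<bar>)"
    by (rule sum_abs)
  also have "\<dots> \<le> (\<Sum>i\<le>d. D * (1 / \<delta>) ^ d)"
    unfolding abs_mult using small abs_lagrange_basis_le[OF _ \<delta> u nodes sep] D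
    by (intro sum_mono mult_mono) auto
  also have "\<dots> = (real d + 1) * D * (1 / \<delta>) ^ d" by simp
  finally show ?thesis .
qed

subsection \<open>Bounded polynomials of bounded degree\<close>

definition bounded_polys_C01 :: "nat \<Rightarrow> real \<Rightarrow> (real \<Rightarrow> real) set" where
  "bounded_polys_C01 d M =
     {restrict (poly P) {0..1} | P. degree P \<le> d \<and> (\<forall>u\<in>{0..1}. \<bar>poly P u\<bar> \<le> M)}"

text \<open>Interpolation at the equidistant nodes j/(d+1) identifies a polynomial with its values
  there, which are bounded by M; this places the set inside the image of a coefficient box.\<close>

lemma mtotally_bounded_bounded_polys_C01:
  "Metric_space.mtotally_bounded (mspace C01) (mdist C01) (bounded_polys_C01 d M)"
proof -
  define v where "v j = real j / (real d + 1)" for j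
  define F where "F c = restrict (\<lambda>u. \<Sum>i\<le>d. c i * lagrange_basis v d i u) {0..1::real}" for c
  have nodes: "v j \<in> {0..1}" if "j \<le> d" for j
    using that by (simp add: v_def)
  have sep: "1 / (real d + 1) \<le> \<bar>v i - v j\<bar>" if "i \<noteq> j" for i j
  proof -
    have "1 \<le> \<bar>real i - real j\<bar>" using that by linarith
    then show ?thesis
      by (simp add: v_def diff_divide_distrib[symmetric] divide_right_mono)
  qed
  have "bounded_polys_C01 d M \<subseteq> F ` {c. \<forall>i\<le>d. \<bar>c i\<bar> \<le> max 0 M}"
  proof
    fix f assume "f \<in> bounded_polys_C01 d M"
    then obtain P where f: "f = restrict (poly P) {0..1}" and deg: "degree P \<le> d"
      and bound: "\<forall>u\<in>{0..1}. \<bar>poly P u\<bar> \<le> M"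
      unfolding bounded_polys_C01_def by blast
    have "v i \<noteq> v j" if "i \<noteq> j" for i j
      using sep[OF that] by (auto simp: add_pos_nonneg)
    then have "f = F (\<lambda>i. poly P (v i))"
      unfolding f F_def using poly_eq_lagrange_interpolation[OF deg] by auto
    moreover have "\<bar>poly P (v i)\<bar> \<le> max 0 M" if "i \<le> d" for i
      using bound nodes[OF that] by fastforce
    ultimately show "f \<in> F ` {c. \<forall>i\<le>d. \<bar>c i\<bar> \<le> max 0 M}" by blast
  qed
  moreover have "\<bar>lagrange_basis v d i u\<bar> \<le> (real d + 1) ^ d" if "i \<le> d" "u \<in> {0..1}" for i u
    using abs_lagrange_basis_le[OF that(1) _ that(2) nodes sep] by simp
  then have "Metric_space.mtotally_bounded (mspace C01) (mdist C01) (F ` {c. \<forall>i\<le>d. \<bar>c i\<bar> \<le> max 0 M})"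
    unfolding F_def
    by (intro mtotally_bounded_C01_linear_image_box continuous_on_lagrange_basis) auto
  ultimately show ?thesis
    by (rule Metric_space.mtotally_bounded_subset[OF Metric_space_mspace_mdist, rotated])
qed

subsection \<open>Polynomials small on many grid points\<close>

lemma sorted_wrt_less_nth_add_le:
  fixes s :: "nat list"
  assumes "sorted_wrt (<) s" "a \<le> b" "b < length s"
  shows "s ! a + (b - a) \<le> s ! b"
  using assms(2,3)
proof (induction b)
  case 0
  then show ?case by simp
next
  case (Suc b)
  show ?case
  proof (cases "a = Suc b")
    case False
    then have "s ! a + (b - a) \<le> s ! b" "a \<le> b" using Suc by simp_all
    moreover have "s ! b < s ! Suc b" using sorted_wrt_nth_less[OF assms(1)] Suc by simp
    ultimately show ?thesis by linarith
  qed simp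
qed

lemma obtain_spread_elements:
  fixes A :: "nat set" and d k :: nat
  assumes "finite A" "0 < k" "(d + 1) * k \<le> card A"
  obtains t where "\<And>i. i \<le> d \<Longrightarrow> t i \<in> A" "\<And>i j. i < j \<Longrightarrow> j \<le> d \<Longrightarrow> t i + k \<le> t j"
proof -
  define s where "s = sorted_list_of_set A"
  have s: "sorted_wrt (<) s" "length s = card A" "set s = A"
    using assms(1) by (simp_all add: s_def)
  have index: "i * k < length s" if "i \<le> d" for i
  proof -
    have "i * k < (d + 1) * k" using that assms(2) by (intro mult_less_mono1) simp_all
    then show ?thesis using assms(3) s(2) by linarith
  qed
  show ?thesis
  proof (rule that[of "\<lambda>i. s ! (i * k)"])
    show "s ! (i * k) \<in> A" if "i \<le> d" for i
      using index[OF that] s(3) nth_mem by blast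
  next
    fix i j assume ij: "i < j" "j \<le> d"
    have "s ! (i * k) + (j * k - i * k) \<le> s ! (j * k)"
      using ij index[OF ij(2)] by (intro sorted_wrt_less_nth_add_le[OF s(1)]) simp_all
    moreover have "1 * k \<le> (j - i) * k"
      using ij by (intro mult_le_mono1) simp
    then have "k \<le> j * k - i * k" by (simp add: diff_mult_distrib)
    ultimately show "s ! (i * k) + k \<le> s ! (j * k)" by linarith
  qed
qed

text \<open>Splitting the sorted grid points t/n, t \<in> A, into d+1 blocks of card A div (d+1)
  consecutive points and taking the first point of each block gives nodes at mutual distance
  at least card A / (2(d+1)n).\<close>

lemma abs_poly_le_of_small_on_grid:
  fixes P :: "real poly" and A :: "nat set" and n d :: nat
  assumes deg: "degree P \<le> d" and A: "A \<subseteq> {..n}" and card: "2 * (d + 1) \<le> card A"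
    and small: "\<And>t. t \<in> A \<Longrightarrow> \<bar>poly P (real t / real n)\<bar> \<le> D"
    and u: "u \<in> {0..1}"
  shows "\<bar>poly P u\<bar> \<le> (real d + 1) * D * (2 * (real d + 1) * real n / real (card A)) ^ d"
proof -
  define k where "k = card A div (d + 1)"
  have k: "1 \<le> k" using card by (simp add: k_def less_eq_div_iff_mult_less_eq)
  have "finite A" using A finite_subset by blast
  moreover have "(d + 1) * k \<le> card A" unfolding k_def by (rule times_div_less_eq_dividend)
  ultimately obtain t where tA: "\<And>i. i \<le> d \<Longrightarrow> t i \<in> A"
    and gap: "\<And>i j. i < j \<Longrightarrow> j \<le> d \<Longrightarrow> t i + k \<le> t j"
    using k by (elim obtain_spread_elements) auto
  have card_le: "card A \<le> 2 * (d + 1) * k"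
  proof -
    have "card A = (d + 1) * k + card A mod (d + 1)"
      unfolding k_def by (rule mult_div_mod_eq[symmetric])
    moreover have "card A mod (d + 1) < d + 1" by simp
    moreover have "d + 1 \<le> (d + 1) * k" using mult_le_mono2[OF k, of "d + 1"] by simp
    ultimately show ?thesis by linarith
  qed
  have "card A \<le> n + 1" using card_mono[OF _ A] by simp
  then have n: "0 < real n" using card by simp
  have D: "0 \<le> D" using small[OF tA[OF le0]] by (rule order.trans[OF abs_ge_zero])
  define \<delta> where "\<delta> = real k / real n"
  have \<delta>: "0 < \<delta>" using k n by (simp add: \<delta>_def)
  have nodes: "real (t i) / real n \<in> {0..1}" if "i \<le> d" for i
    using tA[OF that] A n by (auto simp: divide_le_eq)
  have sep: "\<delta> \<le> \<bar>real (t i) / real n - real (t j) / real n\<bar>" if "i \<le> d" "j \<le> d" "i \<noteq> j" for i j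
  proof -
    have "real k \<le> \<bar>real (t i) - real (t j)\<bar>"
      using that gap[of i j] gap[of j i] by (cases "i < j") auto
    then show ?thesis
      using n by (simp add: \<delta>_def diff_divide_distrib[symmetric] divide_right_mono)
  qed
  have "1 / \<delta> = 2 * (real d + 1) * real n / (2 * (real d + 1) * real k)"
    using k by (simp add: \<delta>_def)
  also have "\<dots> \<le> 2 * (real d + 1) * real n / real (card A)"
  proof (intro divide_left_mono mult_pos_pos)
    show "real (card A) \<le> 2 * (real d + 1) * real k"
      using of_nat_mono[OF card_le, where 'a = real] by (simp add: algebra_simps)
  qed (use card k in simp_all)
  finally have "(real d + 1) * D * (1 / \<delta>) ^ d
      \<le> (real d + 1) * D * (2 * (real d + 1) * real n / real (card A)) ^ d"
    using D \<delta> by (intro mult_left_mono power_mono) simp_all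
  moreover have "\<bar>poly P u\<bar> \<le> (real d + 1) * D * (1 / \<delta>) ^ d"
    using abs_poly_le_of_separated_nodes[where w = "\<lambda>i. real (t i) / real n", OF deg \<delta> D nodes sep small[OF tA] u] .
  ultimately show ?thesis by linarith
qed

lemma rescaled_diff_in_bounded_polys_C01:
  fixes T Ts :: "nat \<Rightarrow> real poly"
  assumes deg: "degree (T x) \<le> d" "degree (Ts xs) \<le> d" and \<epsilon>: "0 < \<epsilon>"
    and n: "4 * (real d + 1) \<le> real n * \<epsilon>"
    and card: "real n * \<epsilon> \<le> real (card (I_set n D Ts xs T x))"
  shows "restrict (\<lambda>u. rescaled (T x) n u - rescaled (Ts xs) n u) {0..1}
           \<in> bounded_polys_C01 d ((real d + 1) * D * (2 * (real d + 1) / \<epsilon>) ^ d)"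
proof -
  define A where "A = I_set n D Ts xs T x"
  define P where "P = pcompose (T x - Ts xs) [:0, real n:]"
  have poly_P: "poly P u = rescaled (T x) n u - rescaled (Ts xs) n u" for u
    by (simp add: P_def rescaled_def poly_pcompose mult.commute)
  have "degree P \<le> degree (T x - Ts xs) * degree [:0, real n:]"
    unfolding P_def by (rule degree_pcompose_le)
  also have "\<dots> \<le> d * 1"
    using deg by (intro mult_le_mono degree_diff_le) (simp_all add: degree_pCons_eq_if)
  finally have deg_P: "degree P \<le> d" by simp
  have n_pos: "0 < real n" using n by (cases "n = 0") simp_all
  have small: "\<bar>poly P (real t / real n)\<bar> \<le> D" if "t \<in> A" for t
    using that n_pos by (simp add: A_def I_set_def poly_P rescaled_def abs_minus_commute)
  have A: "A \<subseteq> {..n}" by (auto simp: A_def I_set_def)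
  have card_A: "2 * (d + 1) \<le> card A" using n card by (simp add: A_def)
  then obtain t where "t \<in> A" by fastforce
  then have D: "0 \<le> D" using small by (meson abs_ge_zero order.trans)
  have "0 < real n * \<epsilon>" using n_pos \<epsilon> by simp
  then have card_pos: "0 < real (card A)" using card unfolding A_def by linarith
  have "2 * (real d + 1) * real n / real (card A) \<le> 2 * (real d + 1) * real n / (real n * \<epsilon>)"
    using card card_pos n_pos \<epsilon> unfolding A_def[symmetric] by (intro divide_left_mono mult_pos_pos) simp_all
  also have "\<dots> = 2 * (real d + 1) / \<epsilon>" using n_pos by simp
  finally have "(real d + 1) * D * (2 * (real d + 1) * real n / real (card A)) ^ d
      \<le> (real d + 1) * D * (2 * (real d + 1) / \<epsilon>) ^ d"
    using D by (intro mult_left_mono power_mono) simp_all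
  then have "\<bar>poly P u\<bar> \<le> (real d + 1) * D * (2 * (real d + 1) / \<epsilon>) ^ d" if "u \<in> {0..1}" for u
    using abs_poly_le_of_small_on_grid[OF deg_P A card_A small that] by linarith
  then show ?thesis
    unfolding bounded_polys_C01_def using deg_P by (auto simp: poly_P[symmetric] intro!: exI[of _ P])
qed

theorem theorem11:
  fixes K d :: nat and \<sigma>m :: real and \<Gamma> :: "(real \<Rightarrow> real) set"
    and Ks :: nat and ps :: "nat \<Rightarrow> real" and Qs :: "nat \<Rightarrow> nat \<Rightarrow> real"
    and gs :: "nat \<Rightarrow> real \<Rightarrow> real" and Ts :: "nat \<Rightarrow> real poly" and \<epsilon> D :: real
  assumes "1 \<le> K" and "1 \<le> d" and "0 < \<sigma>m" and "\<sigma>m < 1"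
    and "\<forall>g\<in>\<Gamma>. (\<forall>y. 0 \<le> g y) \<and> (g has_integral 1) UNIV"
    and "(Ks, ps, Qs, gs, Ts) \<in> Theta K d \<sigma>m \<Gamma>"
    and "0 < \<epsilon>" and "\<epsilon> \<le> 1" and "0 < D"
  shows "relatively_compact_C01
    {restrict (\<lambda>u. rescaled (T x) n u - rescaled (Ts xs) n u) {0..1} |
       n K' p Q g T x xs.
       real n \<ge> 4 * real K * (real d + 1) / \<epsilon> \<and> (K', p, Q, g, T) \<in> Theta K d \<sigma>m \<Gamma> \<and>
       x \<in> {1..K'} \<and> xs \<in> {1..Ks} \<and>
       real (card (I_set n D (Ts) xs T x)) \<ge> real n * \<epsilon>}"
    (is "relatively_compact_C01 ?S")
proof -
  have "4 * (real d + 1) \<le> real n * \<epsilon>" if "4 * real K * (real d + 1) / \<epsilon> \<le> real n" for n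
  proof -
    have "4 * (real d + 1) \<le> 4 * real K * (real d + 1)"
      using \<open>1 \<le> K\<close> by (intro mult_right_mono) simp_all
    with that show ?thesis using \<open>0 < \<epsilon>\<close> by (simp add: divide_le_eq)
  qed
  then have "?S \<subseteq> bounded_polys_C01 d ((real d + 1) * D * (2 * (real d + 1) / \<epsilon>) ^ d)"
    using assms(6) \<open>0 < \<epsilon>\<close> unfolding Theta_def
    by (intro subsetI, elim CollectE exE conjE, hypsubst, intro rescaled_diff_in_bounded_polys_C01) auto
  then show ?thesis
    by (intro relatively_compact_C01I Metric_space.mtotally_bounded_subset[OF Metric_space_mspace_mdist
          mtotally_bounded_bounded_polys_C01])
qed

end
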